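(* If $X\in\mathbf{M}_{2n}(\mathbb{C})$ satisfies $X^{\sharp}=X$, then there is a unitary $U\in\mathbf{M}_{2n}(\mathbb{C})$ with $U^{\sharp}=U$ and $X=U|X|$, where $|X|=(X^*X)^{1/2}$.
   Context: For $X\in\mathbf{M}_{2n}(\mathbb{C})$ in $n\times n$ blocks $X=\begin{bmatrix}A&B\\C&D\end{bmatrix}$, the dual operation is $X^{\sharp}=\begin{bmatrix}D^{\mathrm T}&-B^{\mathrm T}\\-C^{\mathrm T}&A^{\mathrm T}\end{bmatrix}$. $(X^*X)^{1/2}$ is the positive semidefinite square root. *)

theory Defs
  imports "Jordan_Normal_Form.Schur_Decomposition"
begin

definition sharp :: "nat \<Rightarrow> complex mat \<Rightarrow> complex mat" where
  "sharp n X = (case split_block X n n of (A, B, C, D) \<Rightarrow>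
     four_block_mat (transpose_mat D) (- transpose_mat B)
                    (- transpose_mat C) (transpose_mat A))"

definition unitary_mat :: "nat \<Rightarrow> complex mat \<Rightarrow> bool" where
  "unitary_mat N U \<longleftrightarrow> U \<in> carrier_mat N N \<and> mat_adjoint U * U = 1\<^sub>m N"

definition psd_mat :: "nat \<Rightarrow> complex mat \<Rightarrow> bool" where
  "psd_mat N P \<longleftrightarrow> P \<in> carrier_mat N N \<and> mat_adjoint P = P \<and>
     (\<forall>v \<in> carrier_vec N. 0 \<le> Re (scalar_prod (P *\<^sub>v v) (conjugate v)))"

definition mat_abs :: "nat \<Rightarrow> complex mat \<Rightarrow> complex mat" where
  "mat_abs N X = (THE P. psd_mat N P \<and> P * P = mat_adjoint X * X)"

end

theory Submission
  imports Defs
begin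

text \<open>
  If \<open>X\<close> is invertible, its polar factor \<open>U = X |X|^-1\<close> is unitary. The dual operation is
  \<open>X^# = J X^T J^-1\<close> with \<open>J = [0, I; -I, 0]\<close>, an anti-automorphism commuting with the
  adjoint. So for \<open>X^# = X\<close> the matrix \<open>|X|^#\<close> is a positive semidefinite square root of
  \<open>X^# (X^#)^* = X X^* = (U |X| U^*)^2\<close>, and uniqueness of such roots gives \<open>|X|^# = U |X| U^*\<close>.
  Hence \<open>X = |X|^# U\<close>, and applying \<open>#\<close> to \<open>U = X |X|^-1\<close> gives \<open>U^# = U\<close>.

  A singular \<open>#\<close>-fixed \<open>X\<close> is the limit of the invertible \<open>#\<close>-fixed matrices \<open>X + t I\<close>,
  \<open>t \<rightarrow> 0\<close> avoiding the spectrum of \<open>-X\<close>. By compactness of the unitary group a subsequence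
  of their polar factors converges, and the limit is a \<open>#\<close>-fixed polar factor of \<open>X\<close>
  because \<open>|X|\<close> is determined by \<open>|X|^2 = X^* X\<close>.
\<close>

section \<open>Conjugate transpose and unitary matrices\<close>

lemma mat_adjoint_dim [simp]: "dim_row (mat_adjoint A) = dim_col A" "dim_col (mat_adjoint A) = dim_row A"
  by (simp_all add: mat_adjoint_def mat_of_rows_def)

lemma mat_adjoint_carrier [simp]: "A \<in> carrier_mat n m \<Longrightarrow> mat_adjoint A \<in> carrier_mat m n"
  by auto

lemma mult_carrier_mat_square [simp]:
  "A \<in> carrier_mat n n \<Longrightarrow> B \<in> carrier_mat n n \<Longrightarrow> A * B \<in> carrier_mat n n"
  by auto

lemma mat_adjoint_index [simp]:
  "i < dim_col A \<Longrightarrow> j < dim_row A \<Longrightarrow> mat_adjoint (A :: complex mat) $$ (i, j) = cnj (A $$ (j, i))"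
  by (simp add: mat_adjoint_def mat_of_rows_def)

lemma mat_adjoint_adjoint [simp]: "mat_adjoint (mat_adjoint (A :: complex mat)) = A"
  by (rule eq_matI) auto

lemma mat_adjoint_one [simp]: "mat_adjoint (1\<^sub>m n :: complex mat) = 1\<^sub>m n"
  by (rule eq_matI) auto

lemma mat_mult_index_sum:
  assumes "A \<in> carrier_mat n m" "B \<in> carrier_mat m p" "i < n" "j < p"
  shows "(A * B) $$ (i, j) = (\<Sum>k<m. A $$ (i, k) * B $$ (k, j))"
  using assms by (auto simp: scalar_prod_def intro!: sum.cong)

lemma mat_adjoint_mult:
  fixes A B :: "complex mat"
  assumes "A \<in> carrier_mat n m" "B \<in> carrier_mat m p"
  shows "mat_adjoint (A * B) = mat_adjoint B * mat_adjoint A"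
proof (rule eq_matI)
  fix i j assume "i < dim_row (mat_adjoint B * mat_adjoint A)" "j < dim_col (mat_adjoint B * mat_adjoint A)"
  with assms have ij: "i < p" "j < n" by auto
  have "mat_adjoint (A * B) $$ (i, j) = (\<Sum>k<m. cnj (B $$ (k, i)) * cnj (A $$ (j, k)))"
    using assms ij by (simp add: mat_mult_index_sum[OF assms(1,2)] mult.commute del: index_mult_mat(1))
  also have "\<dots> = (mat_adjoint B * mat_adjoint A) $$ (i, j)"
    using assms ij by (simp add: mat_mult_index_sum[of _ p m _ n] del: index_mult_mat(1))
  finally show "mat_adjoint (A * B) $$ (i, j) = (mat_adjoint B * mat_adjoint A) $$ (i, j)" .
qed (use assms in auto)

lemma mat_adjoint_mult_index:
  fixes A B :: "complex mat"
  assumes "A \<in> carrier_mat n m" "B \<in> carrier_mat n p" "i < m" "j < p"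
  shows "(mat_adjoint A * B) $$ (i, j) = col B j \<bullet>c col A i"
  using assms by (simp add: mat_mult_index_sum[of _ m n _ p] scalar_prod_def lessThan_atLeast0 mult.commute
      del: index_mult_mat(1))

lemma mat_adjoint_cscalar_prod:
  fixes M :: "complex mat"
  assumes "M \<in> carrier_mat n m" "x \<in> carrier_vec m" "y \<in> carrier_vec n"
  shows "(M *\<^sub>v x) \<bullet>c y = x \<bullet>c (mat_adjoint M *\<^sub>v y)"
proof -
  have "(M *\<^sub>v x) \<bullet>c y = (\<Sum>i<n. (\<Sum>k<m. M $$ (i, k) * x $ k) * cnj (y $ i))"
    using assms by (auto simp: scalar_prod_def intro!: sum.cong)
  also have "\<dots> = (\<Sum>k<m. \<Sum>i<n. M $$ (i, k) * x $ k * cnj (y $ i))"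
    by (simp add: sum_distrib_right sum.swap[of _ "{..<n}"])
  also have "\<dots> = (\<Sum>k<m. x $ k * cnj (\<Sum>i<n. cnj (M $$ (i, k)) * y $ i))"
    by (simp add: sum_distrib_left mult_ac)
  also have "\<dots> = x \<bullet>c (mat_adjoint M *\<^sub>v y)"
    using assms by (auto simp: scalar_prod_def intro!: sum.cong)
  finally show ?thesis .
qed

lemma unitary_mat_carrier: "unitary_mat n U \<Longrightarrow> U \<in> carrier_mat n n"
  by (simp add: unitary_mat_def)

lemma unitary_mat_right: "unitary_mat n U \<Longrightarrow> U * mat_adjoint U = 1\<^sub>m n"
  unfolding unitary_mat_def using mat_mult_left_right_inverse[of "mat_adjoint U" n U] by auto

lemma unitary_mat_mult:
  assumes U: "unitary_mat n U" and V: "unitary_mat n V"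
  shows "unitary_mat n (U * V)"
proof -
  have c: "U \<in> carrier_mat n n" "V \<in> carrier_mat n n"
    using U V by (auto simp: unitary_mat_def)
  have "mat_adjoint (U * V) * (U * V) = mat_adjoint V * ((mat_adjoint U * U) * V)"
    using c by (simp add: mat_adjoint_mult assoc_mult_mat[of _ n n _ n _ n])
  then show ?thesis
    using U V c by (simp add: unitary_mat_def)
qed

lemma unitary_mat_cancel_left:
  assumes V: "unitary_mat n V" and X: "X \<in> carrier_mat n n"
  shows "mat_adjoint V * (V * X) = X" and "V * (mat_adjoint V * X) = X"
proof -
  have Vc: "V \<in> carrier_mat n n" using V by (simp add: unitary_mat_def)
  show "mat_adjoint V * (V * X) = X"
    using V X Vc by (simp add: unitary_mat_def flip: assoc_mult_mat[of _ n n _ n _ n])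
  show "V * (mat_adjoint V * X) = X"
    using X Vc by (simp add: unitary_mat_right[OF V] flip: assoc_mult_mat[of _ n n _ n _ n])
qed

lemma unitary_mat_conj_cancel:
  assumes W: "unitary_mat n W" and A: "A \<in> carrier_mat n n"
  shows "W * (mat_adjoint W * A * W) * mat_adjoint W = A"
proof -
  have Wc: "W \<in> carrier_mat n n" using W by (simp add: unitary_mat_def)
  have "W * (mat_adjoint W * A * W) * mat_adjoint W = (W * mat_adjoint W) * A * (W * mat_adjoint W)"
    using Wc A by (simp add: assoc_mult_mat[of _ n n _ n _ n])
  then show ?thesis
    using A by (simp add: unitary_mat_right[OF W])
qed

lemma unitary_mat_conj_mult:
  assumes V: "unitary_mat n V" and "A \<in> carrier_mat n n" "B \<in> carrier_mat n n"
  shows "(V * A * mat_adjoint V) * (V * B * mat_adjoint V) = V * (A * B) * mat_adjoint V"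
proof -
  have Vc: "V \<in> carrier_mat n n" using V by (simp add: unitary_mat_def)
  have "(V * A * mat_adjoint V) * (V * B * mat_adjoint V) = V * A * (mat_adjoint V * V) * B * mat_adjoint V"
    using Vc assms by (simp add: assoc_mult_mat[of _ n n _ n _ n])
  then show ?thesis
    using V assms by (simp add: unitary_mat_def assoc_mult_mat[of _ n n _ n _ n])
qed

lemma unitary_mat_col_norm:
  assumes "unitary_mat n U" "i < n"
  shows "col U i \<bullet>c col U i = 1"
  using assms mat_adjoint_mult_index[of U n n U n i i] by (simp add: unitary_mat_def)

section \<open>Positive semidefinite matrices\<close>

lemma mat_diag_index [simp]: "i < n \<Longrightarrow> j < n \<Longrightarrow> mat_diag n f $$ (i, j) = (if i = j then f i else 0)"
  by (simp add: mat_diag_def)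

lemma mat_diag_dims [simp]: "dim_row (mat_diag n f) = n" "dim_col (mat_diag n f) = n"
  by (simp_all add: mat_diag_def)

lemma mat_diag_mult_vec_index:
  assumes "v \<in> carrier_vec n" "i < n"
  shows "(mat_diag n f *\<^sub>v v) $ i = f i * v $ i"
  using assms by (simp add: mat_diag_def scalar_prod_def) (subst sum.remove[of _ i]; auto)

lemma complex_nonneg_cnj: "0 \<le> z \<Longrightarrow> cnj z = (z :: complex)"
  by (simp add: less_eq_complex_def complex_eq_iff)

lemma psd_mat_diag:
  assumes d: "\<And>i. i < n \<Longrightarrow> 0 \<le> d i"
  shows "psd_mat n (mat_diag n d)"
proof -
  have "0 \<le> (mat_diag n d *\<^sub>v v) \<bullet>c v" if v: "v \<in> carrier_vec n" for v
  proof -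
    have "(mat_diag n d *\<^sub>v v) \<bullet>c v = (\<Sum>i<n. d i * (v $ i * cnj (v $ i)))"
      using v by (simp add: scalar_prod_def mat_diag_mult_vec_index lessThan_atLeast0 mult.assoc
          del: index_mult_mat_vec)
    also have "\<dots> \<ge> 0"
    proof (rule sum_nonneg)
      fix i assume "i \<in> {..<n}"
      then show "0 \<le> d i * (v $ i * cnj (v $ i))"
        using d conjugate_square_positive[of "v $ i"] by simp
    qed
    finally show ?thesis .
  qed
  moreover have "mat_adjoint (mat_diag n d) = mat_diag n d"
    using d by (intro eq_matI) (auto simp: complex_nonneg_cnj)
  ultimately show ?thesis
    by (simp add: psd_mat_def less_eq_complex_def)
qed

lemma psd_mat_conj:
  assumes P: "psd_mat n P" and V: "V \<in> carrier_mat m n"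
  shows "psd_mat m (V * P * mat_adjoint V)"
proof -
  have Pc: "P \<in> carrier_mat n n" and hP: "mat_adjoint P = P"
    using P by (auto simp: psd_mat_def)
  have "mat_adjoint (V * P * mat_adjoint V) = mat_adjoint (mat_adjoint V) * mat_adjoint (V * P)"
    using Pc V by (simp add: mat_adjoint_mult[of _ m n _ m])
  also have "\<dots> = V * P * mat_adjoint V"
    using Pc V by (simp add: mat_adjoint_mult[of _ m n _ n] hP assoc_mult_mat[of _ m n _ n _ m])
  finally have "mat_adjoint (V * P * mat_adjoint V) = V * P * mat_adjoint V" .
  moreover have "0 \<le> Re ((V * P * mat_adjoint V *\<^sub>v v) \<bullet>c v)" if v: "v \<in> carrier_vec m" for v
  proof -
    have w: "mat_adjoint V *\<^sub>v v \<in> carrier_vec n"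
      using mult_mat_vec_carrier[OF mat_adjoint_carrier[OF V] v] .
    have "V * P * mat_adjoint V *\<^sub>v v = V *\<^sub>v (P *\<^sub>v (mat_adjoint V *\<^sub>v v))"
      by (simp add: assoc_mult_mat_vec[OF mult_carrier_mat[OF V Pc] mat_adjoint_carrier[OF V] v]
          assoc_mult_mat_vec[OF V Pc w])
    then have "(V * P * mat_adjoint V *\<^sub>v v) \<bullet>c v
      = (P *\<^sub>v (mat_adjoint V *\<^sub>v v)) \<bullet>c (mat_adjoint V *\<^sub>v v)"
      using mat_adjoint_cscalar_prod[OF V _ v] Pc w by simp
    then show ?thesis using P w by (simp add: psd_mat_def)
  qed
  moreover have "V * P * mat_adjoint V \<in> carrier_mat m m"
    using Pc V by (meson mat_adjoint_carrier mult_carrier_mat)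
  ultimately show ?thesis by (simp add: psd_mat_def)
qed

lemma psd_mat_adjoint_mult_self:
  assumes "X \<in> carrier_mat m n"
  shows "psd_mat n (mat_adjoint X * X)"
proof -
  have "psd_mat m (1\<^sub>m m)"
    using psd_mat_diag[of m "\<lambda>_. 1"] by (simp add: less_eq_complex_def)
  from psd_mat_conj[OF this, of "mat_adjoint X" n] show ?thesis
    using assms by simp
qed

section \<open>The spectral theorem for Hermitian matrices\<close>

lemma cscalar_prod_smult:
  fixes v w :: "complex vec"
  assumes "v \<in> carrier_vec n" "w \<in> carrier_vec n"
  shows "(a \<cdot>\<^sub>v v) \<bullet>c (b \<cdot>\<^sub>v w) = a * cnj b * (v \<bullet>c w)"
  using assms by (simp add: conjugate_smult_vec)

lemma cscalar_prod_self_normalize: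
  fixes v :: "complex vec"
  assumes v: "v \<in> carrier_vec n" and v0: "v \<bullet>c v \<noteq> 0"
  defines "c \<equiv> complex_of_real (1 / sqrt (Re (v \<bullet>c v)))"
  shows "(c \<cdot>\<^sub>v v) \<bullet>c (c \<cdot>\<^sub>v v) = 1"
proof -
  obtain r where r: "v \<bullet>c v = complex_of_real r"
    using nonnegative_complex_is_real[OF conjugate_square_ge_0_vec[of v]] by (auto elim: Reals_cases)
  with v0 conjugate_square_ge_0_vec[of v] have "0 < r"
    by (auto simp: less_eq_complex_def)
  have "(c \<cdot>\<^sub>v v) \<bullet>c (c \<cdot>\<^sub>v v) = c * cnj c * (v \<bullet>c v)"
    by (rule cscalar_prod_smult[OF v v])
  also have "\<dots> = complex_of_real (1 / sqrt r) * complex_of_real (1 / sqrt r) * complex_of_real r"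
    by (simp add: c_def r)
  also have "\<dots> = 1"
    using \<open>0 < r\<close> by (simp flip: of_real_mult)
  finally show ?thesis .
qed

lemma unitary_mat_first_col_exists:
  fixes v :: "complex vec"
  assumes v: "v \<in> carrier_vec n" and v0: "v \<noteq> 0\<^sub>v n"
  shows "\<exists>W c. unitary_mat n W \<and> col W 0 = c \<cdot>\<^sub>v v"
proof -
  interpret cof_vec_space n "TYPE(complex)" .
  define b where "b = basis_completion v"
  from basis_completion[OF v v0, folded b_def]
  have b: "distinct b" "\<not> lin_dep (set b)" "set b \<subseteq> carrier_vec n" "hd b = v" "length b = n"
    by auto
  then obtain vs where bv: "b = v # vs"
    using v v0 by (cases b) auto
  define ws where "ws = gram_schmidt n b"
  from gram_schmidt_result[OF b(3,1,2) refl, folded ws_def]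
  have ws: "set ws \<subseteq> carrier_vec n" "corthogonal ws" "length ws = n"
    by (auto simp: b(5))
  have "ws \<noteq> []"
    using ws(3) bv b(5) by auto
  then have ws0: "ws ! 0 = v"
    using gram_schmidt_hd[OF v, of vs] bv unfolding ws_def by (simp add: hd_conv_nth)
  have wsi: "ws ! i \<in> carrier_vec n" if "i < n" for i
    using ws that by auto
  define c where "c i = complex_of_real (1 / sqrt (Re (ws ! i \<bullet>c ws ! i)))" for i
  define W where "W = mat n n (\<lambda>(i, j). c j * ws ! j $ i)"
  have W: "W \<in> carrier_mat n n" by (simp add: W_def)
  have colW: "col W j = c j \<cdot>\<^sub>v ws ! j" if "j < n" for j
    using that wsi[OF that] by (auto simp: W_def)
  have "mat_adjoint W * W = 1\<^sub>m n"
  proof (rule eq_matI)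
    fix i j assume "i < dim_row (1\<^sub>m n)" "j < dim_col (1\<^sub>m n)"
    then have ij: "i < n" "j < n" by auto
    have "(mat_adjoint W * W) $$ (i, j) = (c j \<cdot>\<^sub>v ws ! j) \<bullet>c (c i \<cdot>\<^sub>v ws ! i)"
      using mat_adjoint_mult_index[OF W W ij] ij by (simp add: colW)
    also have "\<dots> = 1\<^sub>m n $$ (i, j)"
    proof (cases "i = j")
      case True
      have "ws ! i \<bullet>c ws ! i \<noteq> 0"
        using corthogonalD[OF ws(2), of i i] ij ws(3) by auto
      then show ?thesis
        using True ij cscalar_prod_self_normalize[OF wsi] by (simp add: c_def)
    next
      case False
      then show ?thesis
        using ij corthogonalD[OF ws(2), of j i] ws(3) by (simp add: cscalar_prod_smult[OF wsi wsi])
    qed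
    finally show "(mat_adjoint W * W) $$ (i, j) = 1\<^sub>m n $$ (i, j)" .
  qed (use W in auto)
  moreover have "col W 0 = c 0 \<cdot>\<^sub>v v"
    using colW[of 0] ws0 b(5) bv by auto
  ultimately show ?thesis
    using W unfolding unitary_mat_def by blast
qed

lemma four_block_diag_mult:
  assumes "A1 \<in> carrier_mat n1 n1" "B1 \<in> carrier_mat n1 n1" "A2 \<in> carrier_mat n2 n2" "B2 \<in> carrier_mat n2 n2"
  shows "four_block_mat A1 (0\<^sub>m n1 n2) (0\<^sub>m n2 n1) A2 * four_block_mat B1 (0\<^sub>m n1 n2) (0\<^sub>m n2 n1) B2
    = four_block_mat (A1 * B1) (0\<^sub>m n1 n2) (0\<^sub>m n2 n1) (A2 * B2)"
  using assms by (simp add: mult_four_block_mat[OF assms(1) _ _ assms(3) assms(2) _ _ assms(4)])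

lemma mat_adjoint_four_block_diag:
  fixes A D :: "complex mat"
  assumes "A \<in> carrier_mat n1 n1" "D \<in> carrier_mat n2 n2"
  shows "mat_adjoint (four_block_mat A (0\<^sub>m n1 n2) (0\<^sub>m n2 n1) D)
    = four_block_mat (mat_adjoint A) (0\<^sub>m n1 n2) (0\<^sub>m n2 n1) (mat_adjoint D)"
  using assms by (intro eq_matI) auto

lemma hermitian_unitary_deflation:
  fixes A :: "complex mat"
  assumes A: "A \<in> carrier_mat (Suc m) (Suc m)" "mat_adjoint A = A"
    and W: "unitary_mat (Suc m) W" and e: "A *\<^sub>v col W 0 = e \<cdot>\<^sub>v col W 0"
  shows "\<exists>B. B \<in> carrier_mat m m \<and> mat_adjoint B = B \<and> e \<in> \<real> \<and>
    mat_adjoint W * A * W = four_block_mat (mat 1 1 (\<lambda>_. e)) (0\<^sub>m 1 m) (0\<^sub>m m 1) B"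
proof -
  have Wc: "W \<in> carrier_mat (Suc m) (Suc m)" using W by (rule unitary_mat_carrier)
  define C where "C = mat_adjoint W * A * W"
  have Cc: "C \<in> carrier_mat (Suc m) (Suc m)"
    using A Wc by (simp add: C_def)
  have hC: "mat_adjoint C = C"
    using A Wc by (simp add: C_def mat_adjoint_mult[of _ "Suc m" "Suc m" _ "Suc m"]
        assoc_mult_mat[of _ "Suc m" "Suc m" _ "Suc m" _ "Suc m"])
  have col0: "C $$ (i, 0) = (if i = 0 then e else 0)" if i: "i < Suc m" for i
  proof -
    have "C = mat_adjoint W * (A * W)"
      using A Wc by (simp add: C_def assoc_mult_mat[of _ "Suc m" "Suc m" _ "Suc m" _ "Suc m"])
    then have "C $$ (i, 0) = col (A * W) 0 \<bullet>c col W i"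
      using A Wc i mat_adjoint_mult_index[of W "Suc m" "Suc m" "A * W" "Suc m" i 0] by simp
    also have "\<dots> = (e \<cdot>\<^sub>v col W 0) \<bullet>c col W i"
      unfolding col_mult2[OF A(1) Wc zero_less_Suc] e ..
    also have "\<dots> = e * (col W 0 \<bullet>c col W i)"
      using Wc i by simp
    also have "\<dots> = e * (mat_adjoint W * W) $$ (i, 0)"
      using mat_adjoint_mult_index[OF Wc Wc i, of 0] by simp
    finally show ?thesis
      using W i by (simp add: unitary_mat_def)
  qed
  have hC_index: "C $$ (i, j) = cnj (C $$ (j, i))" if "i < Suc m" "j < Suc m" for i j
    using hC Cc that by (metis carrier_matD mat_adjoint_index)
  have row0: "C $$ (0, j) = cnj (C $$ (j, 0))" if "j < Suc m" for j
    using that by (intro hC_index) auto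
  define B where "B = mat m m (\<lambda>(i, j). C $$ (Suc i, Suc j))"
  have "C = four_block_mat (mat 1 1 (\<lambda>_. e)) (0\<^sub>m 1 m) (0\<^sub>m m 1) B"
  proof (rule eq_matI)
    fix i j assume "i < dim_row (four_block_mat (mat 1 1 (\<lambda>_. e)) (0\<^sub>m 1 m) (0\<^sub>m m 1) B)"
      "j < dim_col (four_block_mat (mat 1 1 (\<lambda>_. e)) (0\<^sub>m 1 m) (0\<^sub>m m 1) B)"
    then have ij: "i < Suc m" "j < Suc m" by (auto simp: B_def)
    show "C $$ (i, j) = four_block_mat (mat 1 1 (\<lambda>_. e)) (0\<^sub>m 1 m) (0\<^sub>m m 1) B $$ (i, j)"
      using ij col0 row0[OF ij(2)] by (cases i; cases j) (auto simp: B_def)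
  qed (use Cc in \<open>auto simp: B_def\<close>)
  moreover have "e \<in> \<real>"
    using row0[of 0] col0[of 0] by (simp add: Reals_cnj_iff)
  moreover have "mat_adjoint B = B"
  proof (rule eq_matI)
    fix i j assume "i < dim_row B" "j < dim_col B"
    then show "mat_adjoint B $$ (i, j) = B $$ (i, j)"
      using hC_index[of "Suc i" "Suc j"] by (simp add: B_def)
  qed (simp_all add: B_def)
  moreover have "B \<in> carrier_mat m m"
    by (simp add: B_def)
  ultimately show ?thesis
    unfolding C_def by blast
qed

lemma unitary_diag_four_block:
  assumes V: "unitary_mat m V"
  shows "\<exists>V'. unitary_mat (Suc m) V' \<and>
    four_block_mat (mat 1 1 (\<lambda>_. e)) (0\<^sub>m 1 m) (0\<^sub>m m 1) (V * mat_diag m d * mat_adjoint V)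
      = V' * mat_diag (Suc m) (case_nat e d) * mat_adjoint V'"
proof -
  have Vc: "V \<in> carrier_mat m m" using V by (rule unitary_mat_carrier)
  define V' where "V' = four_block_mat (1\<^sub>m 1) (0\<^sub>m 1 m) (0\<^sub>m m 1) V"
  have V'c: "V' \<in> carrier_mat (Suc m) (Suc m)"
    using four_block_carrier_mat[of "1\<^sub>m 1" 1 1 V m m] Vc by (simp add: V'_def)
  have aV': "mat_adjoint V' = four_block_mat (1\<^sub>m 1) (0\<^sub>m 1 m) (0\<^sub>m m 1) (mat_adjoint V)"
    using Vc by (simp add: V'_def mat_adjoint_four_block_diag)
  have "mat_adjoint V' * V' = four_block_mat (1\<^sub>m 1 * 1\<^sub>m 1) (0\<^sub>m 1 m) (0\<^sub>m m 1) (mat_adjoint V * V)"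
    unfolding aV' unfolding V'_def by (rule four_block_diag_mult) (use Vc in auto)
  also have "\<dots> = 1\<^sub>m (Suc m)"
    using four_block_one_mat[of 1 m] V by (simp add: unitary_mat_def)
  finally have "unitary_mat (Suc m) V'"
    using V'c by (simp add: unitary_mat_def)
  moreover have "mat_diag (Suc m) (case_nat e d)
    = four_block_mat (mat 1 1 (\<lambda>_. e)) (0\<^sub>m 1 m) (0\<^sub>m m 1) (mat_diag m d)"
    by (rule eq_matI) (auto split: nat.split)
  then have "V' * mat_diag (Suc m) (case_nat e d)
    = four_block_mat (1\<^sub>m 1 * mat 1 1 (\<lambda>_. e)) (0\<^sub>m 1 m) (0\<^sub>m m 1) (V * mat_diag m d)"
    unfolding V'_def by (simp only:) (rule four_block_diag_mult, use Vc in auto)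
  then have "V' * mat_diag (Suc m) (case_nat e d) * mat_adjoint V'
    = four_block_mat (1\<^sub>m 1 * mat 1 1 (\<lambda>_. e) * 1\<^sub>m 1) (0\<^sub>m 1 m) (0\<^sub>m m 1)
        (V * mat_diag m d * mat_adjoint V)"
    unfolding aV' by (simp only:) (rule four_block_diag_mult, use Vc in auto)
  ultimately show ?thesis
    by auto
qed

lemma hermitian_mat_unitary_diag:
  fixes A :: "complex mat"
  assumes "A \<in> carrier_mat n n" "mat_adjoint A = A"
  shows "\<exists>V d. unitary_mat n V \<and> (\<forall>i<n. d i \<in> \<real>) \<and> A = V * mat_diag n d * mat_adjoint V"
  using assms
proof (induction n arbitrary: A)
  case 0
  have "unitary_mat 0 (1\<^sub>m 0)"
    by (simp add: unitary_mat_def)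
  moreover have "A = 1\<^sub>m 0 * mat_diag 0 (\<lambda>_. 0) * mat_adjoint (1\<^sub>m 0)"
    using 0 by (intro eq_matI) auto
  ultimately show ?case by blast
next
  case (Suc m)
  have A: "A \<in> carrier_mat (Suc m) (Suc m)" and hA: "mat_adjoint A = A" by fact+
  obtain e where "poly (char_poly A) e = 0"
    using alg_closed_imp_poly_has_root[of "char_poly A"] degree_monic_char_poly[OF A] by auto
  then obtain v where "eigenvector A v e"
    using eigenvalue_root_char_poly[OF A] by (auto simp: eigenvalue_def)
  then have v: "v \<in> carrier_vec (Suc m)" "v \<noteq> 0\<^sub>v (Suc m)" and Av: "A *\<^sub>v v = e \<cdot>\<^sub>v v"
    using A by (auto simp: eigenvector_def)
  obtain W c where W: "unitary_mat (Suc m) W" and Wv: "col W 0 = c \<cdot>\<^sub>v v"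
    using unitary_mat_first_col_exists[OF v] by blast
  have Wc: "W \<in> carrier_mat (Suc m) (Suc m)" using W by (rule unitary_mat_carrier)
  have "A *\<^sub>v col W 0 = e \<cdot>\<^sub>v col W 0"
    using A v Av by (simp add: Wv mult_mat_vec smult_smult_assoc mult.commute)
  then obtain B where B: "B \<in> carrier_mat m m" "mat_adjoint B = B" and e: "e \<in> \<real>"
    and AB: "mat_adjoint W * A * W = four_block_mat (mat 1 1 (\<lambda>_. e)) (0\<^sub>m 1 m) (0\<^sub>m m 1) B"
    using hermitian_unitary_deflation[OF A hA W] by blast
  obtain V d where V: "unitary_mat m V" and d: "\<forall>i<m. d i \<in> \<real>"
    and BV: "B = V * mat_diag m d * mat_adjoint V"
    using Suc.IH[OF B] by blast
  obtain V' where V': "unitary_mat (Suc m) V'"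
    and AV': "mat_adjoint W * A * W = V' * mat_diag (Suc m) (case_nat e d) * mat_adjoint V'"
    using unitary_diag_four_block[OF V, of e d] by (auto simp: AB BV)
  have V'c: "V' \<in> carrier_mat (Suc m) (Suc m)" using V' by (rule unitary_mat_carrier)
  have "A = W * (V' * mat_diag (Suc m) (case_nat e d) * mat_adjoint V') * mat_adjoint W"
    using unitary_mat_conj_cancel[OF W A] by (simp add: AV')
  also have "\<dots> = (W * V') * mat_diag (Suc m) (case_nat e d) * mat_adjoint (W * V')"
    using Wc V'c by (simp add: mat_adjoint_mult[OF Wc V'c] assoc_mult_mat[of _ "Suc m" "Suc m" _ "Suc m" _ "Suc m"])
  finally have "A = (W * V') * mat_diag (Suc m) (case_nat e d) * mat_adjoint (W * V')" .
  moreover have "\<forall>i<Suc m. case_nat e d i \<in> \<real>"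
    using d e by (auto split: nat.split)
  ultimately show ?case
    using unitary_mat_mult[OF W V'] by blast
qed

section \<open>Positive square roots and the absolute value\<close>

lemma unitary_diag_mult_col:
  assumes V: "unitary_mat n V" and i: "i < n"
  shows "(V * mat_diag n d * mat_adjoint V) *\<^sub>v col V i = d i \<cdot>\<^sub>v col V i"
proof -
  have Vc: "V \<in> carrier_mat n n" using V by (simp add: unitary_mat_def)
  have "V * mat_diag n d * mat_adjoint V * V = V * mat_diag n d"
    using V Vc by (simp add: assoc_mult_mat[of _ n n _ n _ n] unitary_mat_def)
  then have "(V * mat_diag n d * mat_adjoint V) *\<^sub>v col V i = col (V * mat_diag n d) i"
    using Vc i by (metis col_mult2 mat_adjoint_carrier mat_diag_dim mult_carrier_mat_square)
  also have "\<dots> = d i \<cdot>\<^sub>v col V i"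
    using Vc i by (auto simp: mat_diag_mult_right[OF Vc])
  finally show ?thesis .
qed

lemma psd_mat_iff_unitary_diag:
  "psd_mat n P \<longleftrightarrow> (\<exists>V d. unitary_mat n V \<and> (\<forall>i<n. 0 \<le> d i) \<and> P = V * mat_diag n d * mat_adjoint V)"
proof
  assume P: "psd_mat n P"
  then have Pc: "P \<in> carrier_mat n n" and "mat_adjoint P = P"
    by (auto simp: psd_mat_def)
  then obtain V d where V: "unitary_mat n V" and d: "\<forall>i<n. d i \<in> \<real>"
    and PV: "P = V * mat_diag n d * mat_adjoint V"
    using hermitian_mat_unitary_diag by blast
  have "0 \<le> d i" if i: "i < n" for i
  proof -
    have c: "col V i \<in> carrier_vec n"
      using V i by (simp add: unitary_mat_def)
    have "(P *\<^sub>v col V i) \<bullet>c col V i = d i"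
      using unitary_diag_mult_col[OF V i] unitary_mat_col_norm[OF V i] c by (simp add: PV)
    then have "0 \<le> Re (d i)"
      using P c by (auto simp: psd_mat_def)
    then show ?thesis
      using d i by (auto simp: less_eq_complex_def complex_is_Real_iff)
  qed
  then show "\<exists>V d. unitary_mat n V \<and> (\<forall>i<n. 0 \<le> d i) \<and> P = V * mat_diag n d * mat_adjoint V"
    using V PV by blast
next
  assume "\<exists>V d. unitary_mat n V \<and> (\<forall>i<n. 0 \<le> d i) \<and> P = V * mat_diag n d * mat_adjoint V"
  then show "psd_mat n P"
    by (auto intro!: psd_mat_conj psd_mat_diag simp: unitary_mat_def)
qed

lemma psd_mat_sqrt_exists:
  assumes "psd_mat n A"
  shows "\<exists>P. psd_mat n P \<and> P * P = A"
proof -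
  obtain V d where V: "unitary_mat n V" and d: "\<forall>i<n. 0 \<le> d i"
    and AV: "A = V * mat_diag n d * mat_adjoint V"
    using assms by (auto simp: psd_mat_iff_unitary_diag)
  define P where "P = V * mat_diag n (\<lambda>i. csqrt (d i)) * mat_adjoint V"
  have "0 \<le> csqrt (d i)" if "i < n" for i
    using d that by (auto simp: less_eq_complex_def)
  then have "psd_mat n P"
    unfolding psd_mat_iff_unitary_diag P_def using V by (intro exI[of _ V] exI[of _ "\<lambda>i. csqrt (d i)"]) auto
  moreover have "P * P = A"
  proof -
    have "mat_diag n (\<lambda>i. csqrt (d i)) * mat_diag n (\<lambda>i. csqrt (d i)) = mat_diag n d"
      by (simp add: power2_eq_square[symmetric])
    then show ?thesis
      by (simp add: P_def AV unitary_mat_conj_mult[OF V])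
  qed
  ultimately show ?thesis by blast
qed

lemma complex_nonneg_mult_self_eq:
  fixes a b :: complex
  assumes "0 \<le> a" "0 \<le> b" "a * a = b * b"
  shows "a = b"
proof -
  obtain x y where xy: "a = complex_of_real x" "b = complex_of_real y"
    using assms(1,2) nonnegative_complex_is_real by (metis Reals_cases)
  with assms have "0 \<le> x" "0 \<le> y" "x * x = y * y"
    by (auto simp: less_eq_complex_def simp flip: of_real_mult)
  then show ?thesis
    using xy by (metis power2_eq_iff_nonneg power2_eq_square)
qed

lemma psd_mat_sqrt_unique:
  assumes P: "psd_mat n P" and Q: "psd_mat n Q" and PQ: "P * P = Q * Q"
  shows "P = Q"
proof -
  obtain V d where V: "unitary_mat n V" and d: "\<forall>i<n. 0 \<le> d i"
    and PV: "P = V * mat_diag n d * mat_adjoint V"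
    using P by (auto simp: psd_mat_iff_unitary_diag)
  obtain W e where W: "unitary_mat n W" and e: "\<forall>i<n. 0 \<le> e i"
    and QW: "Q = W * mat_diag n e * mat_adjoint W"
    using Q by (auto simp: psd_mat_iff_unitary_diag)
  have Vc: "V \<in> carrier_mat n n" and Wc: "W \<in> carrier_mat n n"
    using V W by (simp_all add: unitary_mat_def)
  define C where "C = mat_adjoint V * W"
  have Cc: "C \<in> carrier_mat n n"
    using Vc Wc by (simp add: C_def)
  note assoc = assoc_mult_mat[of _ n n _ n _ n]
  have PP: "P * P = V * mat_diag n (\<lambda>i. d i * d i) * mat_adjoint V"
    by (simp add: PV unitary_mat_conj_mult[OF V])
  have QQ: "Q * Q = W * mat_diag n (\<lambda>i. e i * e i) * mat_adjoint W"
    by (simp add: QW unitary_mat_conj_mult[OF W])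
  have "mat_diag n (\<lambda>i. d i * d i) * C = mat_adjoint V * (P * P) * W"
    using Vc Wc by (simp add: PP C_def assoc unitary_mat_cancel_left[OF V])
  also have "\<dots> = C * mat_diag n (\<lambda>i. e i * e i)"
    using W Vc Wc by (simp add: PQ QQ C_def assoc unitary_mat_def)
  finally have DC2: "mat_diag n (\<lambda>i. d i * d i) * C = C * mat_diag n (\<lambda>i. e i * e i)" .
  \<comment> \<open>\<open>C\<close> intertwines \<open>D^2\<close> and \<open>E^2\<close>, hence \<open>D\<close> and \<open>E\<close>, as nonnegative square roots are unique.\<close>
  have DC: "mat_diag n d * C = C * mat_diag n e"
  proof (rule eq_matI)
    fix i j assume "i < dim_row (C * mat_diag n e)" "j < dim_col (C * mat_diag n e)"
    then have ij: "i < n" "j < n" using Cc by auto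
    have "d i * d i * C $$ (i, j) = C $$ (i, j) * (e j * e j)"
      using arg_cong[OF DC2, of "\<lambda>M. M $$ (i, j)"] ij
      by (simp add: mat_diag_mult_left[OF Cc] mat_diag_mult_right[OF Cc])
    then have "C $$ (i, j) = 0 \<or> d i = e j"
      using complex_nonneg_mult_self_eq[of "d i" "e j"] d e ij by (auto simp: mult.commute)
    then show "(mat_diag n d * C) $$ (i, j) = (C * mat_diag n e) $$ (i, j)"
      using ij by (auto simp: mat_diag_mult_left[OF Cc] mat_diag_mult_right[OF Cc])
  qed (use Cc in auto)
  have "P * W = V * (mat_diag n d * C)"
    using Vc Wc by (simp add: PV C_def assoc)
  also have "\<dots> = V * (mat_adjoint V * (W * mat_diag n e))"
    unfolding DC using Vc Wc by (simp add: C_def assoc)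
  also have "\<dots> = W * mat_diag n e"
    using Wc by (simp add: unitary_mat_cancel_left[OF V])
  finally have "P * W * mat_adjoint W = Q"
    by (simp add: QW)
  moreover have "P * W * mat_adjoint W = P"
    using Vc Wc by (simp add: PV assoc unitary_mat_right[OF W])
  ultimately show ?thesis
    by simp
qed

lemma mat_abs_eqI:
  assumes "psd_mat n P" "P * P = mat_adjoint X * X"
  shows "mat_abs n X = P"
  unfolding mat_abs_def using assms psd_mat_sqrt_unique by (intro the_equality) auto

lemma mat_abs:
  assumes "X \<in> carrier_mat m n"
  shows "psd_mat n (mat_abs n X)" and "mat_abs n X * mat_abs n X = mat_adjoint X * X"
proof -
  obtain P where "psd_mat n P" "P * P = mat_adjoint X * X"
    using psd_mat_sqrt_exists[OF psd_mat_adjoint_mult_self[OF assms]] by blast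
  then show "psd_mat n (mat_abs n X)" and "mat_abs n X * mat_abs n X = mat_adjoint X * X"
    using mat_abs_eqI by auto
qed

section \<open>The dual operation\<close>

definition sharp_swap :: "nat \<Rightarrow> nat \<Rightarrow> nat" where
  "sharp_swap n i = (if i < n then i + n else i - n)"

definition sharp_sign :: "nat \<Rightarrow> nat \<Rightarrow> complex" where
  "sharp_sign n i = (if i < n then 1 else -1)"

lemma sharp_swap_less: "i < 2 * n \<Longrightarrow> sharp_swap n i < 2 * n"
  by (auto simp: sharp_swap_def)

lemma sharp_swap_swap: "i < 2 * n \<Longrightarrow> sharp_swap n (sharp_swap n i) = i"
  by (auto simp: sharp_swap_def)

lemma sharp_swap_eq_iff: "i < 2 * n \<Longrightarrow> j < 2 * n \<Longrightarrow> sharp_swap n i = sharp_swap n j \<longleftrightarrow> i = j"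
  by (metis sharp_swap_swap)

lemma sharp_sign_mult_self [simp]: "sharp_sign n i * sharp_sign n i = 1"
  by (simp add: sharp_sign_def)

lemma cnj_sharp_sign [simp]: "cnj (sharp_sign n i) = sharp_sign n i"
  by (simp add: sharp_sign_def)

lemma sum_sharp_swap: "(\<Sum>k<2 * n. f (sharp_swap n k)) = (\<Sum>k<2 * n. f k)"
  by (rule sum.reindex_bij_witness[of _ "sharp_swap n" "sharp_swap n"])
    (auto simp: sharp_swap_less sharp_swap_swap)

lemma sharp_carrier: "X \<in> carrier_mat (2 * n) (2 * n) \<Longrightarrow> sharp n X \<in> carrier_mat (2 * n) (2 * n)"
  by (auto simp: sharp_def split_block_def Let_def)

lemma sharp_index:
  assumes "X \<in> carrier_mat (2 * n) (2 * n)" "i < 2 * n" "j < 2 * n"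
  shows "sharp n X $$ (i, j) = sharp_sign n i * sharp_sign n j * X $$ (sharp_swap n j, sharp_swap n i)"
  using assms by (auto simp: sharp_def split_block_def Let_def sharp_swap_def sharp_sign_def)

lemma sharp_mult:
  assumes A: "A \<in> carrier_mat (2 * n) (2 * n)" and B: "B \<in> carrier_mat (2 * n) (2 * n)"
  shows "sharp n (A * B) = sharp n B * sharp n A"
proof (rule eq_matI)
  note sA = sharp_carrier[OF A] and sB = sharp_carrier[OF B]
  fix i j assume "i < dim_row (sharp n B * sharp n A)" "j < dim_col (sharp n B * sharp n A)"
  then have ij: "i < 2 * n" "j < 2 * n" using sB sA by auto
  let ?s = "sharp_sign n" and ?w = "sharp_swap n"
  have "sharp n (A * B) $$ (i, j) = ?s i * ?s j * (\<Sum>k<2 * n. A $$ (?w j, k) * B $$ (k, ?w i))"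
    using A B ij by (simp add: sharp_index mat_mult_index_sum sharp_swap_less del: index_mult_mat(1))
  also have "\<dots> = ?s i * ?s j * (\<Sum>k<2 * n. A $$ (?w j, ?w k) * B $$ (?w k, ?w i))"
    unfolding sum_sharp_swap[of "\<lambda>k. A $$ (?w j, k) * B $$ (k, ?w i)"] ..
  also have "\<dots> = (\<Sum>k<2 * n. (?s i * ?s k * B $$ (?w k, ?w i)) * (?s k * ?s j * A $$ (?w j, ?w k)))"
    unfolding sum_distrib_left
  proof (rule sum.cong)
    fix k
    have "?s i * ?s j * (A $$ (?w j, ?w k) * B $$ (?w k, ?w i))
      = (?s k * ?s k) * (?s i * ?s j * (A $$ (?w j, ?w k) * B $$ (?w k, ?w i)))"
      by simp
    then show "?s i * ?s j * (A $$ (?w j, ?w k) * B $$ (?w k, ?w i))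
      = (?s i * ?s k * B $$ (?w k, ?w i)) * (?s k * ?s j * A $$ (?w j, ?w k))"
      by (simp only: mult_ac)
  qed simp
  also have "\<dots> = (sharp n B * sharp n A) $$ (i, j)"
    using A B sA sB ij by (simp add: sharp_index mat_mult_index_sum[OF sB sA] del: index_mult_mat(1))
  finally show "sharp n (A * B) $$ (i, j) = (sharp n B * sharp n A) $$ (i, j)" .
qed (use sharp_carrier[OF A] sharp_carrier[OF B] sharp_carrier[OF mult_carrier_mat[OF A B]] in auto)

lemma sharp_mat_adjoint:
  assumes A: "A \<in> carrier_mat (2 * n) (2 * n)"
  shows "sharp n (mat_adjoint A) = mat_adjoint (sharp n A)"
  using A sharp_carrier[OF A] sharp_carrier[OF mat_adjoint_carrier[OF A]]
  by (intro eq_matI) (auto simp: sharp_index sharp_swap_less)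

lemma sharp_one: "sharp n (1\<^sub>m (2 * n)) = 1\<^sub>m (2 * n)"
  using sharp_carrier[OF one_carrier_mat, of n]
  by (intro eq_matI) (auto simp: sharp_index sharp_swap_less sharp_swap_eq_iff)

lemma sharp_char_matrix:
  assumes A: "A \<in> carrier_mat (2 * n) (2 * n)"
  shows "sharp n (char_matrix A e) = char_matrix (sharp n A) e"
proof (rule eq_matI)
  fix i j assume "i < dim_row (char_matrix (sharp n A) e)" "j < dim_col (char_matrix (sharp n A) e)"
  then have ij: "i < 2 * n" "j < 2 * n"
    using sharp_carrier[OF A] by (auto simp: char_matrix_def)
  then show "sharp n (char_matrix A e) $$ (i, j) = char_matrix (sharp n A) e $$ (i, j)"
    using A sharp_carrier[OF A] char_matrix_closed[OF A]
    by (auto simp: char_matrix_def sharp_index sharp_swap_less sharp_swap_eq_iff distrib_left)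
qed (use sharp_carrier[OF char_matrix_closed[OF A], of e] char_matrix_closed[OF sharp_carrier[OF A], of e]
    in simp_all)

lemma psd_mat_sharp:
  assumes P: "psd_mat (2 * n) P"
  shows "psd_mat (2 * n) (sharp n P)"
proof -
  obtain Q where Q: "psd_mat (2 * n) Q" and QQ: "Q * Q = P"
    using psd_mat_sqrt_exists[OF P] by blast
  have Qc: "Q \<in> carrier_mat (2 * n) (2 * n)" and hQ: "mat_adjoint Q = Q"
    using Q by (auto simp: psd_mat_def)
  have "sharp n P = mat_adjoint (sharp n Q) * sharp n Q"
    by (simp add: QQ[symmetric] sharp_mult[OF Qc Qc] hQ flip: sharp_mat_adjoint[OF Qc])
  then show ?thesis
    using psd_mat_adjoint_mult_self[OF sharp_carrier[OF Qc]] by simp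
qed

section \<open>Invertible matrices\<close>

lemma det_nonzero_inverse:
  fixes A :: "'a :: field mat"
  assumes "A \<in> carrier_mat n n" "det A \<noteq> 0"
  obtains B where "B \<in> carrier_mat n n" "A * B = 1\<^sub>m n" "B * A = 1\<^sub>m n"
  using det_non_zero_imp_unit[OF assms, of "()"] that by (auto simp: Units_def ring_mat_simps)

lemma mat_abs_inverse:
  assumes Y: "Y \<in> carrier_mat n n" and dY: "det Y \<noteq> 0"
  obtains Q where "Q \<in> carrier_mat n n" "mat_abs n Y * Q = 1\<^sub>m n" "Q * mat_abs n Y = 1\<^sub>m n"
proof -
  let ?P = "mat_abs n Y"
  have Pc: "?P \<in> carrier_mat n n"
    using mat_abs(1)[OF Y] by (simp add: psd_mat_def)
  obtain Z where Z: "Z \<in> carrier_mat n n" "Y * Z = 1\<^sub>m n" "Z * Y = 1\<^sub>m n"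
    using det_nonzero_inverse[OF Y dY] by blast
  \<comment> \<open>\<open>P^-1 = P (Y^* Y)^-1\<close> because \<open>P^2 = Y^* Y\<close>\<close>
  define Q where "Q = ?P * (Z * mat_adjoint Z)"
  have Qc: "Q \<in> carrier_mat n n"
    using Pc Z by (simp add: Q_def)
  note assoc = assoc_mult_mat[of _ n n _ n _ n]
  have "?P * Q = (?P * ?P) * (Z * mat_adjoint Z)"
    using Pc Z by (simp add: Q_def assoc)
  also have "\<dots> = mat_adjoint Y * (Y * Z) * mat_adjoint Z"
    using Y Z(1) by (simp add: mat_abs(2)[OF Y] assoc)
  also have "\<dots> = mat_adjoint Y * mat_adjoint Z"
    unfolding Z(2) using Y Z by simp
  also have "\<dots> = mat_adjoint (Z * Y)"
    using Y Z(1) by (simp add: mat_adjoint_mult[of Z n n Y n])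
  finally have PQ: "?P * Q = 1\<^sub>m n"
    using Z by simp
  then show ?thesis
    using that Qc Pc mat_mult_left_right_inverse[OF Pc Qc] by blast
qed

lemma sharp_mat_abs:
  assumes Y: "Y \<in> carrier_mat (2 * n) (2 * n)" and sY: "sharp n Y = Y"
    and U: "unitary_mat (2 * n) U" and YU: "Y = U * mat_abs (2 * n) Y"
  shows "sharp n (mat_abs (2 * n) Y) = U * mat_abs (2 * n) Y * mat_adjoint U"
proof (rule psd_mat_sqrt_unique)
  let ?P = "mat_abs (2 * n) Y"
  have P: "psd_mat (2 * n) ?P" and PP: "?P * ?P = mat_adjoint Y * Y"
    using mat_abs[OF Y] by simp_all
  have Pc: "?P \<in> carrier_mat (2 * n) (2 * n)" and hP: "mat_adjoint ?P = ?P"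
    using P by (auto simp: psd_mat_def)
  have Uc: "U \<in> carrier_mat (2 * n) (2 * n)"
    using U by (rule unitary_mat_carrier)
  show "psd_mat (2 * n) (sharp n ?P)"
    using psd_mat_sharp[OF P] .
  show "psd_mat (2 * n) (U * ?P * mat_adjoint U)"
    using psd_mat_conj[OF P Uc] .
  have "sharp n ?P * sharp n ?P = Y * mat_adjoint Y"
    using Y sY by (simp add: sharp_mult[OF Pc Pc, symmetric] PP sharp_mult sharp_mat_adjoint)
  also have "\<dots> = U * (?P * ?P) * mat_adjoint U"
    using Uc Pc by (subst (1 2) YU)
      (simp add: mat_adjoint_mult[OF Uc Pc] hP assoc_mult_mat[of _ "2 * n" "2 * n" _ "2 * n" _ "2 * n"])
  also have "\<dots> = (U * ?P * mat_adjoint U) * (U * ?P * mat_adjoint U)"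
    using Pc by (simp add: unitary_mat_conj_mult[OF U])
  finally show "sharp n ?P * sharp n ?P = (U * ?P * mat_adjoint U) * (U * ?P * mat_adjoint U)" .
qed

lemma sharp_polar_invertible:
  assumes Y: "Y \<in> carrier_mat (2 * n) (2 * n)" and sY: "sharp n Y = Y" and dY: "det Y \<noteq> 0"
  shows "\<exists>U. unitary_mat (2 * n) U \<and> sharp n U = U \<and> Y = U * mat_abs (2 * n) Y"
proof -
  define P where "P = mat_abs (2 * n) Y"
  have PP: "P * P = mat_adjoint Y * Y" and Pc: "P \<in> carrier_mat (2 * n) (2 * n)"
    and hP: "mat_adjoint P = P"
    using mat_abs[OF Y] by (auto simp: P_def psd_mat_def)
  obtain Q where Qc: "Q \<in> carrier_mat (2 * n) (2 * n)" and PQ: "P * Q = 1\<^sub>m (2 * n)"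
    and QP: "Q * P = 1\<^sub>m (2 * n)"
    using mat_abs_inverse[OF Y dY] unfolding P_def by blast
  note assoc = assoc_mult_mat[of _ "2 * n" "2 * n" _ "2 * n" _ "2 * n"]
  define U where "U = Y * Q"
  have Uc: "U \<in> carrier_mat (2 * n) (2 * n)"
    using Y Qc by (simp add: U_def)
  have "mat_adjoint U * U = mat_adjoint Q * (mat_adjoint Y * Y) * Q"
    using Y Qc by (simp add: U_def mat_adjoint_mult[OF Y Qc] assoc)
  also have "\<dots> = mat_adjoint (P * Q) * (P * Q)"
    using Pc Qc by (simp add: PP[symmetric] mat_adjoint_mult[OF Pc Qc] hP assoc)
  finally have U: "unitary_mat (2 * n) U"
    using Uc by (simp add: unitary_mat_def PQ)
  have YUP: "Y = U * P"
    using Y Qc Pc by (simp add: U_def assoc QP)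
  then have "sharp n P = U * P * mat_adjoint U"
    using sharp_mat_abs[OF Y sY U] unfolding P_def by blast
  then have "sharp n P * U = U * P * (mat_adjoint U * U)"
    using Uc Pc by (simp add: assoc)
  then have "Y = sharp n P * U"
    using U Pc by (simp add: unitary_mat_def YUP)
  then have "sharp n U = sharp n (P * Q) * U"
    using Y Uc Qc sharp_carrier[OF Pc] sharp_carrier[OF Qc]
    by (simp add: U_def sharp_mult[OF Y Qc] sY sharp_mult[OF Pc Qc] assoc)
  then have "sharp n U = U"
    using Uc by (simp add: PQ sharp_one)
  then show ?thesis
    using U YUP unfolding P_def by blast
qed

section \<open>Entrywise limits and compactness\<close>

definition mat_LIMSEQ :: "nat \<Rightarrow> (nat \<Rightarrow> complex mat) \<Rightarrow> complex mat \<Rightarrow> bool" where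
  "mat_LIMSEQ n A L \<longleftrightarrow> (\<forall>i<n. \<forall>j<n. (\<lambda>k. A k $$ (i, j)) \<longlonglongrightarrow> L $$ (i, j))"

lemma mat_LIMSEQ_unique:
  assumes "mat_LIMSEQ n A L" "mat_LIMSEQ n A M" "L \<in> carrier_mat n n" "M \<in> carrier_mat n n"
  shows "L = M"
proof (rule eq_matI)
  fix i j assume "i < dim_row M" "j < dim_col M"
  then have "(\<lambda>k. A k $$ (i, j)) \<longlonglongrightarrow> L $$ (i, j)" "(\<lambda>k. A k $$ (i, j)) \<longlonglongrightarrow> M $$ (i, j)"
    using assms by (auto simp: mat_LIMSEQ_def)
  then show "L $$ (i, j) = M $$ (i, j)"
    by (rule LIMSEQ_unique)
qed (use assms in auto)

lemma mat_LIMSEQ_subseq: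
  assumes "mat_LIMSEQ n A L" "strict_mono r"
  shows "mat_LIMSEQ n (\<lambda>k. A (r k)) L"
  unfolding mat_LIMSEQ_def
proof (intro allI impI)
  fix i j assume "i < n" "j < n"
  then have "(\<lambda>k. A k $$ (i, j)) \<longlonglongrightarrow> L $$ (i, j)"
    using assms(1) by (simp add: mat_LIMSEQ_def)
  from LIMSEQ_subseq_LIMSEQ[OF this assms(2)] show "(\<lambda>k. A (r k) $$ (i, j)) \<longlonglongrightarrow> L $$ (i, j)"
    by (simp add: o_def)
qed

lemma mat_LIMSEQ_mult:
  assumes "mat_LIMSEQ n A L" "mat_LIMSEQ n B M"
    and "\<And>k. A k \<in> carrier_mat n n" "\<And>k. B k \<in> carrier_mat n n" "L \<in> carrier_mat n n" "M \<in> carrier_mat n n"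
  shows "mat_LIMSEQ n (\<lambda>k. A k * B k) (L * M)"
  unfolding mat_LIMSEQ_def
proof (intro allI impI)
  fix i j assume ij: "i < n" "j < n"
  have "(\<lambda>k. \<Sum>l<n. A k $$ (i, l) * B k $$ (l, j)) \<longlonglongrightarrow> (\<Sum>l<n. L $$ (i, l) * M $$ (l, j))"
    using assms(1,2) ij unfolding mat_LIMSEQ_def by (intro tendsto_intros) auto
  moreover have "(A k * B k) $$ (i, j) = (\<Sum>l<n. A k $$ (i, l) * B k $$ (l, j))" for k
    using assms(3,4) ij by (rule mat_mult_index_sum)
  ultimately show "(\<lambda>k. (A k * B k) $$ (i, j)) \<longlonglongrightarrow> (L * M) $$ (i, j)"
    using assms(5,6) ij by (simp add: mat_mult_index_sum del: index_mult_mat(1))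
qed

lemma mat_LIMSEQ_adjoint:
  assumes "mat_LIMSEQ n A L" "\<And>k. A k \<in> carrier_mat n n" "L \<in> carrier_mat n n"
  shows "mat_LIMSEQ n (\<lambda>k. mat_adjoint (A k)) (mat_adjoint L)"
proof -
  have "mat_adjoint (A k) $$ (i, j) = cnj (A k $$ (j, i))" if "i < n" "j < n" for i j k
    using assms(2)[of k] that by simp
  then show ?thesis
    using assms(1,3) by (auto simp: mat_LIMSEQ_def intro!: tendsto_cnj)
qed

lemma mat_LIMSEQ_sharp:
  assumes "mat_LIMSEQ (2 * n) A L" "\<And>k. A k \<in> carrier_mat (2 * n) (2 * n)" "L \<in> carrier_mat (2 * n) (2 * n)"
  shows "mat_LIMSEQ (2 * n) (\<lambda>k. sharp n (A k)) (sharp n L)"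
  using assms by (auto simp: mat_LIMSEQ_def sharp_index sharp_swap_less intro!: tendsto_mult_left)

lemma unitary_mat_limit:
  assumes U: "\<And>k. unitary_mat n (U k)" and lim: "mat_LIMSEQ n U L" and L: "L \<in> carrier_mat n n"
  shows "unitary_mat n L"
proof -
  have Uc: "U k \<in> carrier_mat n n" for k
    using U by (rule unitary_mat_carrier)
  have "mat_LIMSEQ n (\<lambda>k. mat_adjoint (U k) * U k) (mat_adjoint L * L)"
    using lim L Uc by (intro mat_LIMSEQ_mult mat_LIMSEQ_adjoint) auto
  moreover have "mat_LIMSEQ n (\<lambda>k. mat_adjoint (U k) * U k) (1\<^sub>m n)"
    using U by (simp add: unitary_mat_def mat_LIMSEQ_def)
  ultimately have "mat_adjoint L * L = 1\<^sub>m n"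
    using L by (intro mat_LIMSEQ_unique) auto
  then show ?thesis
    using L by (simp add: unitary_mat_def)
qed

lemma psd_mat_limit:
  assumes P: "\<And>k. psd_mat n (P k)" and lim: "mat_LIMSEQ n P L" and L: "L \<in> carrier_mat n n"
  shows "psd_mat n L"
proof -
  have Pc: "P k \<in> carrier_mat n n" and hP: "mat_adjoint (P k) = P k" for k
    using P by (auto simp: psd_mat_def)
  have "mat_LIMSEQ n P (mat_adjoint L)"
    using mat_LIMSEQ_adjoint[OF lim Pc L] by (simp add: hP)
  then have "mat_adjoint L = L"
    using lim L by (intro mat_LIMSEQ_unique) auto
  moreover have "0 \<le> Re ((L *\<^sub>v v) \<bullet>c v)" if v: "v \<in> carrier_vec n" for v
  proof -
    have form: "(A *\<^sub>v v) \<bullet>c v = (\<Sum>i<n. (\<Sum>j<n. A $$ (i, j) * v $ j) * cnj (v $ i))"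
      if "A \<in> carrier_mat n n" for A
      using that v by (auto simp: scalar_prod_def intro!: sum.cong)
    have tends: "(\<lambda>k. Re ((P k *\<^sub>v v) \<bullet>c v)) \<longlonglongrightarrow> Re ((L *\<^sub>v v) \<bullet>c v)"
      using lim unfolding form[OF Pc] form[OF L] mat_LIMSEQ_def by (intro tendsto_intros) auto
    have "0 \<le> Re ((P k *\<^sub>v v) \<bullet>c v)" for k
      using P v by (simp add: psd_mat_def)
    then show ?thesis
      by (intro LIMSEQ_le_const[OF tends]) auto
  qed
  ultimately show ?thesis
    using L by (simp add: psd_mat_def)
qed

lemma unitary_mat_index_bound:
  assumes U: "unitary_mat n U" and ij: "i < n" "j < n"
  shows "cmod (U $$ (i, j)) \<le> 1"
proof -
  have Uc: "U \<in> carrier_mat n n" using U by (simp add: unitary_mat_def)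
  have "col U j \<bullet>c col U j = complex_of_real (\<Sum>k<n. (cmod (U $$ (k, j)))\<^sup>2)"
    using Uc ij by (auto simp: scalar_prod_def intro!: sum.cong simp del: of_real_power)
      (metis complex_norm_square)
  then have "(\<Sum>k<n. (cmod (U $$ (k, j)))\<^sup>2) = 1"
    using unitary_mat_col_norm[OF U ij(2)] by (metis of_real_eq_1_iff)
  moreover have "(cmod (U $$ (i, j)))\<^sup>2 \<le> (\<Sum>k<n. (cmod (U $$ (k, j)))\<^sup>2)"
    using ij by (intro member_le_sum) auto
  ultimately show ?thesis
    by (simp add: power_le_one_iff)
qed

lemma bounded_real_seqs_common_convergent_subseq:
  fixes f :: "'i \<Rightarrow> nat \<Rightarrow> real"
  assumes "finite S" "\<And>p. p \<in> S \<Longrightarrow> Bseq (f p)"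
  shows "\<exists>r. strict_mono r \<and> (\<forall>p\<in>S. convergent (\<lambda>k. f p (r k)))"
  using assms
proof (induction S rule: finite_induct)
  case empty
  have "strict_mono (\<lambda>k::nat. k)" by (simp add: strict_mono_def)
  then show ?case by blast
next
  case (insert p S)
  then obtain r where r: "strict_mono r" and conv: "\<forall>q\<in>S. convergent (\<lambda>k. f q (r k))"
    by auto
  obtain s where s: "strict_mono s" and mono: "monoseq (\<lambda>k. f p (r (s k)))"
    using seq_monosub[of "\<lambda>k. f p (r k)"] by blast
  have "convergent (\<lambda>k. f p (r (s k)))"
    using Bseq_monoseq_convergent[OF Bseq_subseq[OF insert.prems[of p]] mono] by simp
  moreover have "convergent (\<lambda>k. f q (r (s k)))" if "q \<in> S" for q
    using convergent_subseq_convergent[OF bspec[OF conv that] s] by (simp add: o_def)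
  ultimately show ?case
    using strict_mono_o[OF r s] by (intro exI[of _ "r \<circ> s"]) (auto simp: o_def)
qed

lemma unitary_seq_convergent_subseq:
  fixes U :: "nat \<Rightarrow> complex mat"
  assumes U: "\<And>k. unitary_mat n (U k)"
  shows "\<exists>r L. strict_mono r \<and> L \<in> carrier_mat n n \<and> mat_LIMSEQ n (\<lambda>k. U (r k)) L"
proof -
  define f where "f = (\<lambda>(i, j, b) k. (if b then Re else Im) (U k $$ (i, j)))"
  have "Bseq (f p)" if p: "p \<in> {..<n} \<times> {..<n} \<times> UNIV" for p
  proof (rule BseqI')
    fix k
    obtain i j b where p: "p = (i, j, b)" "i < n" "j < n"
      using p by auto
    then show "norm (f p k) \<le> 1"
      using unitary_mat_index_bound[OF U p(2,3), of k] abs_Re_le_cmod abs_Im_le_cmod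
      by (auto simp: f_def intro: order_trans)
  qed
  then obtain r where r: "strict_mono r"
    and conv: "\<forall>p\<in>{..<n} \<times> {..<n} \<times> UNIV. convergent (\<lambda>k. f p (r k))"
    using bounded_real_seqs_common_convergent_subseq[of "{..<n} \<times> {..<n} \<times> (UNIV :: bool set)" f]
    by auto
  have "convergent (\<lambda>k. U (r k) $$ (i, j))" if "i < n" "j < n" for i j
  proof -
    have "convergent (\<lambda>k. Re (U (r k) $$ (i, j)))" "convergent (\<lambda>k. Im (U (r k) $$ (i, j)))"
      using conv[rule_format, of "(i, j, True)"] conv[rule_format, of "(i, j, False)"] that
      by (simp_all add: f_def)
    then obtain a b where "(\<lambda>k. Re (U (r k) $$ (i, j))) \<longlonglongrightarrow> a" "(\<lambda>k. Im (U (r k) $$ (i, j))) \<longlonglongrightarrow> b"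
      unfolding convergent_def by blast
    then have "(\<lambda>k. U (r k) $$ (i, j)) \<longlonglongrightarrow> Complex a b"
      by (simp add: tendsto_complex_iff)
    then show ?thesis
      by (rule convergentI)
  qed
  then have "mat_LIMSEQ n (\<lambda>k. U (r k)) (mat n n (\<lambda>(i, j). lim (\<lambda>k. U (r k) $$ (i, j))))"
    by (simp add: mat_LIMSEQ_def convergent_LIMSEQ_iff)
  then show ?thesis
    using r by (intro exI[of _ r] exI[of _ "mat n n (\<lambda>(i, j). lim (\<lambda>k. U (r k) $$ (i, j)))"]) auto
qed

lemma polar_decomposition_limit:
  fixes Y U :: "nat \<Rightarrow> complex mat"
  assumes Y: "\<And>k. Y k \<in> carrier_mat n n" and X: "X \<in> carrier_mat n n"
    and U: "\<And>k. unitary_mat n (U k)" and L: "unitary_mat n L"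
    and YU: "\<And>k. Y k = U k * mat_abs n (Y k)"
    and limY: "mat_LIMSEQ n Y X" and limU: "mat_LIMSEQ n U L"
  shows "X = L * mat_abs n X"
proof -
  have Uc: "U k \<in> carrier_mat n n" for k
    using U by (rule unitary_mat_carrier)
  have Lc: "L \<in> carrier_mat n n"
    using L by (rule unitary_mat_carrier)
  define R where "R = mat_adjoint L * X"
  have Rc: "R \<in> carrier_mat n n"
    using Lc X by (simp add: R_def)
  have absY: "mat_abs n (Y k) = mat_adjoint (U k) * Y k" for k
  proof -
    have "mat_abs n (Y k) \<in> carrier_mat n n"
      using mat_abs(1)[OF Y] by (simp add: psd_mat_def)
    then have "mat_abs n (Y k) = mat_adjoint (U k) * (U k * mat_abs n (Y k))"
      by (simp add: unitary_mat_cancel_left[OF U])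
    then show ?thesis
      by (simp flip: YU)
  qed
  have limA: "mat_LIMSEQ n (\<lambda>k. mat_abs n (Y k)) R"
    unfolding absY R_def using limU limY Uc Lc Y X
    by (intro mat_LIMSEQ_mult mat_LIMSEQ_adjoint) auto
  have R: "psd_mat n R"
    using psd_mat_limit[OF mat_abs(1)[OF Y] limA Rc] .
  have "mat_LIMSEQ n (\<lambda>k. mat_abs n (Y k) * mat_abs n (Y k)) (R * R)"
    using limA Rc mat_abs(1)[OF Y] by (intro mat_LIMSEQ_mult) (auto simp: psd_mat_def)
  moreover have "mat_LIMSEQ n (\<lambda>k. mat_abs n (Y k) * mat_abs n (Y k)) (mat_adjoint X * X)"
    unfolding mat_abs(2)[OF Y] using limY Y X by (intro mat_LIMSEQ_mult mat_LIMSEQ_adjoint) auto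
  ultimately have "R * R = mat_adjoint X * X"
    using Rc X by (intro mat_LIMSEQ_unique) auto
  then have "mat_abs n X = R"
    using mat_abs_eqI[OF R] by blast
  then show ?thesis
    using X by (simp add: R_def unitary_mat_cancel_left[OF L])
qed

lemma sharp_polar_limit:
  fixes Y :: "nat \<Rightarrow> complex mat"
  assumes Y: "\<And>k. Y k \<in> carrier_mat (2 * n) (2 * n)" and X: "X \<in> carrier_mat (2 * n) (2 * n)"
    and lim: "mat_LIMSEQ (2 * n) Y X"
    and polar: "\<And>k. \<exists>U. unitary_mat (2 * n) U \<and> sharp n U = U \<and> Y k = U * mat_abs (2 * n) (Y k)"
  shows "\<exists>U. unitary_mat (2 * n) U \<and> sharp n U = U \<and> X = U * mat_abs (2 * n) X"
proof -
  from choice[OF allI[OF polar]] obtain U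
    where UY: "\<forall>k. unitary_mat (2 * n) (U k) \<and> sharp n (U k) = U k \<and> Y k = U k * mat_abs (2 * n) (Y k)" ..
  have U: "unitary_mat (2 * n) (U k)" and sU: "sharp n (U k) = U k"
    and YU: "Y k = U k * mat_abs (2 * n) (Y k)" for k
    using UY[rule_format, of k] by meson+
  have Uc: "U k \<in> carrier_mat (2 * n) (2 * n)" for k
    using U by (rule unitary_mat_carrier)
  obtain r L where r: "strict_mono r" and Lc: "L \<in> carrier_mat (2 * n) (2 * n)"
    and limU: "mat_LIMSEQ (2 * n) (\<lambda>k. U (r k)) L"
    using unitary_seq_convergent_subseq[where U = U, OF U] by blast
  have L: "unitary_mat (2 * n) L"
    using unitary_mat_limit[OF U limU Lc] .
  have "mat_LIMSEQ (2 * n) (\<lambda>k. U (r k)) (sharp n L)"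
    using mat_LIMSEQ_sharp[OF limU Uc Lc] by (simp add: sU)
  then have "sharp n L = L"
    using limU Lc sharp_carrier[OF Lc] by (intro mat_LIMSEQ_unique) auto
  moreover have "X = L * mat_abs (2 * n) X"
    using polar_decomposition_limit[OF Y X U L YU mat_LIMSEQ_subseq[OF lim r] limU] .
  ultimately show ?thesis
    using L by blast
qed

section \<open>Approximation by invertible matrices\<close>

lemma eigenvalue_avoiding_null_seq:
  fixes A :: "complex mat"
  assumes A: "A \<in> carrier_mat n n"
  shows "\<exists>t. t \<longlonglongrightarrow> 0 \<and> (\<forall>k. \<not> eigenvalue A (- t k))"
proof -
  have "char_poly A \<noteq> 0"
    using degree_monic_char_poly[OF A] by auto
  then have "finite {e. eigenvalue A e}"
    using poly_roots_finite by (simp add: eigenvalue_root_char_poly[OF A])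
  moreover have "inj (\<lambda>k. - inverse (of_nat (Suc k)) :: complex)"
    by (auto simp: inj_def)
  ultimately have "finite ((\<lambda>k. - inverse (of_nat (Suc k)) :: complex) -` {e. eigenvalue A e})"
    by (rule finite_vimageI)
  then have "finite {k. eigenvalue A (- inverse (of_nat (Suc k)))}"
    by (simp add: vimage_def)
  then obtain m where m: "\<And>k. eigenvalue A (- inverse (of_nat (Suc k))) \<Longrightarrow> k < m"
    using finite_nat_set_iff_bounded by auto
  have "(\<lambda>k. inverse (of_nat (k + Suc m)) :: complex) \<longlonglongrightarrow> 0"
    using LIMSEQ_ignore_initial_segment[OF lim_inverse_n, of "Suc m"] .
  moreover have "\<not> eigenvalue A (- inverse (of_nat (k + Suc m)))" for k
    using m[of "k + m"] by auto
  ultimately show ?thesis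
    by blast
qed

lemma mat_LIMSEQ_char_matrix:
  assumes A: "A \<in> carrier_mat n n" and t: "t \<longlonglongrightarrow> 0"
  shows "mat_LIMSEQ n (\<lambda>k. char_matrix A (t k)) A"
  unfolding mat_LIMSEQ_def
proof (intro allI impI)
  fix i j assume ij: "i < n" "j < n"
  have "(\<lambda>k. A $$ (i, j) + - t k * 1\<^sub>m n $$ (i, j)) \<longlonglongrightarrow> A $$ (i, j) + - 0 * 1\<^sub>m n $$ (i, j)"
    by (intro tendsto_intros t)
  then show "(\<lambda>k. char_matrix A (t k) $$ (i, j)) \<longlonglongrightarrow> A $$ (i, j)"
    using A ij by (simp add: char_matrix_def)
qed

theorem mainTheorem12:
  fixes n :: nat and X :: "complex mat"
  assumes "X \<in> carrier_mat (2 * n) (2 * n)"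
    and "sharp n X = X"
  shows "\<exists>U. unitary_mat (2 * n) U \<and> sharp n U = U \<and> X = U * mat_abs (2 * n) X"
proof -
  obtain t where t: "t \<longlonglongrightarrow> 0" and noneig: "\<And>k. \<not> eigenvalue X (- t k)"
    using eigenvalue_avoiding_null_seq[OF assms(1)] by blast
  \<comment> \<open>\<open>char_matrix X (- t k) = X + t k \<cdot>\<^sub>m 1\<^sub>m (2 * n)\<close>\<close>
  define Y where "Y k = char_matrix X (- t k)" for k
  have Y: "Y k \<in> carrier_mat (2 * n) (2 * n)" for k
    using assms(1) by (simp add: Y_def)
  show ?thesis
  proof (rule sharp_polar_limit[OF Y assms(1)])
    show "mat_LIMSEQ (2 * n) Y X"
      unfolding Y_def using mat_LIMSEQ_char_matrix[OF assms(1) tendsto_minus[OF t, simplified]] by simp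
    show "\<exists>U. unitary_mat (2 * n) U \<and> sharp n U = U \<and> Y k = U * mat_abs (2 * n) (Y k)" for k
      using sharp_polar_invertible[OF Y] noneig[of k] assms
      by (simp add: Y_def sharp_char_matrix eigenvalue_det)
  qed
qed

end
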